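(* Let $S$ be a (Hausdorff) topological semigroup such that $S\times S$ is countably compact, and let $\lambda$ be an infinite cardinal. Then $S$ does not contain a subsemigroup isomorphic to the semigroup $B_\lambda$ of $\lambda\times\lambda$-matrix units.
   Context: A topological semigroup is a Hausdorff space with a continuous associative multiplication. For a nonzero cardinal $\lambda$, the semigroup of $\lambda\times\lambda$-matrix units is $B_\lambda=(\lambda\times\lambda)\cup\{0\}$ with $(a,b)\cdot(c,d)=(a,d)$ if $b=c$, $(a,b)\cdot(c,d)=0$ if $b\neq c$, and $0$ a zero element. *)

theory Defs
  imports "HOL-Analysis.Analysis"
begin

text \<open>The semigroup B_L of L x L matrix units: carrier (L x L) plus a zero,
  where the zero is represented by None and (a,b) by Some (a,b).\<close>

definition matrix_units :: "'l set \<Rightarrow> ('l \<times> 'l) option set" where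
  "matrix_units L = insert None (Some ` (L \<times> L))"

fun mu_mult :: "('l \<times> 'l) option \<Rightarrow> ('l \<times> 'l) option \<Rightarrow> ('l \<times> 'l) option" where
  "mu_mult (Some (a, b)) (Some (c, d)) = (if b = c then Some (a, d) else None)"
| "mu_mult _ _ = None"

definition topological_semigroup :: "('a::t2_space \<Rightarrow> 'a \<Rightarrow> 'a) \<Rightarrow> bool" where
  "topological_semigroup m \<longleftrightarrow>
     (\<forall>x y z. m (m x y) z = m x (m y z)) \<and>
     continuous_on UNIV (\<lambda>p. m (fst p) (snd p))"

definition contains_copy_of_matrix_units :: "('a \<Rightarrow> 'a \<Rightarrow> 'a) \<Rightarrow> 'l set \<Rightarrow> bool" where
  "contains_copy_of_matrix_units m L \<longleftrightarrow>
     (\<exists>T h. (\<forall>x\<in>T. \<forall>y\<in>T. m x y \<in> T) \<and>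
            bij_betw h (matrix_units L) T \<and>
            (\<forall>x\<in>matrix_units L. \<forall>y\<in>matrix_units L. h (mu_mult x y) = m (h x) (h y)))"

end

theory Submission
  imports Defs
begin

(*
  An infinite L contains a countable subset, so a copy of B_L yields elements
  e i j (i, j :: nat) and a zero z with e i j * e k l = e i l if j = k and = z otherwise,
  and e 0 0 \<noteq> z.  The pairs (e n 0, e 0 n) form an infinite countable subset of S x S,
  hence have an accumulation point (x, y).  Continuity of the multiplication passes
  "eventual" identities to the accumulation point:
    y * x = e 0 0,             as  e 0 n * e n 0 = e 0 0  for every n;
    e 0 k * x = z for each k,  as  e 0 k * e n 0 = z     for every n \<noteq> k;
    y * x = z,                 as  e 0 n * x = z         for every n;
  so e 0 0 = z, a contradiction.
*)

lemma value_at_accumulation_point: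
  fixes f :: "'a::topological_space \<Rightarrow> 'b::t1_space"
  assumes cont: "continuous_on UNIV f"
    and acc: "\<forall>U. p \<in> U \<and> open U \<longrightarrow> infinite (U \<inter> A)"
    and fin: "finite F"
    and const: "\<forall>t\<in>A - F. f t = c"
  shows "f p = c"
proof (rule ccontr)
  assume "f p \<noteq> c"
  let ?U = "f -` (- {c})"
  have "open ?U" by (rule open_vimage[OF open_Compl[OF closed_singleton] cont])
  with \<open>f p \<noteq> c\<close> have "infinite (?U \<inter> A)" using acc by simp
  moreover have "?U \<inter> A \<subseteq> F" using const by blast
  ultimately show False using finite_subset fin by blast
qed

lemma continuous_on_binop_compose:
  assumes "continuous_on UNIV (\<lambda>p. m (fst p) (snd p))"
    and "continuous_on UNIV g1" "continuous_on UNIV g2"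
  shows "continuous_on UNIV (\<lambda>p. m (g1 p) (g2 p))"
proof -
  have "continuous_on UNIV ((\<lambda>p. m (fst p) (snd p)) \<circ> (\<lambda>p. (g1 p, g2 p)))"
    by (rule continuous_on_compose[OF continuous_on_Pair[OF assms(2,3)]])
       (rule continuous_on_subset[OF assms(1)], simp)
  then show ?thesis by (simp add: o_def)
qed

definition nat_matrix_units :: "('a \<Rightarrow> 'a \<Rightarrow> 'a) \<Rightarrow> (nat \<Rightarrow> nat \<Rightarrow> 'a) \<Rightarrow> 'a \<Rightarrow> bool" where
  "nat_matrix_units m e z \<longleftrightarrow>
     (\<forall>i j k l. m (e i j) (e k l) = (if j = k then e i l else z)) \<and> e 0 0 \<noteq> z"

text \<open>A copy of \<open>B\<^sub>L\<close> for infinite \<open>L\<close> restricts, along an injection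
  \<open>\<nat> \<rightarrow> L\<close>, to a nat-indexed family of matrix units.\<close>

lemma matrix_units_copy_imp_nat_matrix_units:
  fixes L :: "'l set"
  assumes "contains_copy_of_matrix_units m L" and "infinite L"
  obtains e z where "nat_matrix_units m e z"
proof -
  obtain T h where bij: "bij_betw h (matrix_units L) T"
    and hom: "\<forall>x\<in>matrix_units L. \<forall>y\<in>matrix_units L. h (mu_mult x y) = m (h x) (h y)"
    using assms(1) unfolding contains_copy_of_matrix_units_def by blast
  obtain a :: "nat \<Rightarrow> 'l" where a_inj: "inj a" and a_L: "range a \<subseteq> L"
    using infinite_countable_subset[OF assms(2)] by blast
  have unit_mem: "Some (a i, a j) \<in> matrix_units L" for i j
    using a_L unfolding matrix_units_def by auto
  have zero_mem: "None \<in> matrix_units L" unfolding matrix_units_def by simp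
  define e where "e i j = h (Some (a i, a j))" for i j
  have "m (e i j) (e k l) = (if j = k then e i l else h None)" for i j k l
  proof -
    have "m (e i j) (e k l) = h (mu_mult (Some (a i, a j)) (Some (a k, a l)))"
      unfolding e_def by (rule hom[rule_format, OF unit_mem unit_mem, symmetric])
    then show ?thesis using a_inj by (simp add: e_def inj_eq)
  qed
  moreover have "e 0 0 \<noteq> h None"
    using inj_onD[OF bij_betw_imp_inj_on[OF bij] _ unit_mem zero_mem] by (auto simp: e_def)
  ultimately show ?thesis using that unfolding nat_matrix_units_def by blast
qed

text \<open>The column \<open>e n 0\<close> of such a family is injective: if \<open>e i 0 = e j 0\<close> with
  \<open>i \<noteq> j\<close>, multiplying on the left by \<open>e 0 i\<close> gives \<open>e 0 0 = z\<close>.\<close>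

lemma nat_matrix_units_column_inj:
  assumes "nat_matrix_units m e z"
  shows "inj (\<lambda>n. e n 0)"
proof
  fix i j assume "e i 0 = e j 0"
  then have "m (e 0 i) (e i 0) = m (e 0 i) (e j 0)" by simp
  with assms show "i = j" unfolding nat_matrix_units_def by (metis (full_types))
qed

lemma no_nat_matrix_units:
  fixes m :: "'a::t2_space \<Rightarrow> 'a \<Rightarrow> 'a"
  assumes cont: "continuous_on UNIV (\<lambda>p. m (fst p) (snd p))"
    and compact: "countably_compact (UNIV :: ('a \<times> 'a) set)"
  shows "\<not> nat_matrix_units m e z"
proof
  assume units: "nat_matrix_units m e z"
  have mult: "m (e i j) (e k l) = (if j = k then e i l else z)" for i j k l
    using units unfolding nat_matrix_units_def by blast
  have nontrivial: "e 0 0 \<noteq> z"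
    using units unfolding nat_matrix_units_def by blast
  define A where "A = range (\<lambda>n. (e n 0, e 0 n))"
  have "inj (\<lambda>n. (e n 0, e 0 n))"
    using nat_matrix_units_column_inj[OF units] by (auto simp: inj_def)
  then have "infinite A" unfolding A_def by (rule range_inj_infinite)
  then obtain x y where acc: "\<forall>U. (x, y) \<in> U \<and> open U \<longrightarrow> infinite (U \<inter> A)"
    using countably_compact_imp_acc_point[OF compact] unfolding A_def by fastforce
  have cfst: "continuous_on UNIV (fst :: 'a \<times> 'a \<Rightarrow> 'a)"
    and csnd: "continuous_on UNIV (snd :: 'a \<times> 'a \<Rightarrow> 'a)"
    by (auto intro: continuous_intros)
  \<comment> \<open>\<open>y * x\<close> is the limit of \<open>e 0 n * e n 0 = e 0 0\<close>\<close>
  have yx_unit: "m y x = e 0 0"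
    using value_at_accumulation_point[where f = "\<lambda>q. m (snd q) (fst q)" and F = "{}",
        OF continuous_on_binop_compose[OF cont csnd cfst] acc]
    by (auto simp: A_def mult)
  \<comment> \<open>\<open>e 0 k * x\<close> is the limit of \<open>e 0 k * e n 0\<close>, which is \<open>z\<close> for \<open>n \<noteq> k\<close>\<close>
  have row_kills_x: "m (e 0 k) x = z" for k
  proof -
    have "\<forall>t\<in>A - {(e k 0, e 0 k)}. m (e 0 k) (fst t) = z"
    proof
      fix t assume "t \<in> A - {(e k 0, e 0 k)}"
      then obtain n where "t = (e n 0, e 0 n)" "n \<noteq> k" unfolding A_def by blast
      then show "m (e 0 k) (fst t) = z" by (simp add: mult)
    qed
    then show ?thesis
      using value_at_accumulation_point[where f = "\<lambda>q. m (e 0 k) (fst q)"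
          and F = "{(e k 0, e 0 k)}",
          OF continuous_on_binop_compose[OF cont continuous_on_const cfst] acc]
      by simp
  qed
  \<comment> \<open>hence \<open>y * x\<close>, the limit of \<open>e 0 n * x = z\<close>, equals \<open>z\<close>\<close>
  have yx_zero: "m y x = z"
    using value_at_accumulation_point[where f = "\<lambda>q. m (snd q) x" and F = "{}",
        OF continuous_on_binop_compose[OF cont csnd continuous_on_const] acc]
    by (auto simp: A_def row_kills_x)
  show False using yx_unit yx_zero nontrivial by simp
qed

theorem theorem4:
  fixes m :: "'a::t2_space \<Rightarrow> 'a \<Rightarrow> 'a" and L :: "'l set"
  assumes "topological_semigroup m"
    and "countably_compact (UNIV :: ('a \<times> 'a) set)"
    and "infinite L"
  shows "\<not> contains_copy_of_matrix_units m L"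
proof
  assume "contains_copy_of_matrix_units m L"
  then obtain e z where "nat_matrix_units m e z"
    using matrix_units_copy_imp_nat_matrix_units[OF _ assms(3)] by blast
  moreover have "continuous_on UNIV (\<lambda>p. m (fst p) (snd p))"
    using assms(1) unfolding topological_semigroup_def by blast
  ultimately show False using no_nat_matrix_units[OF _ assms(2)] by blast
qed

end
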